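(* Let $G \leq \mathrm{Homeo}(\mathbb{S}^1)$ be a group whose action on $\mathbb{S}^1$ is minimal, proximal, and not topologically free. Then $G$ does not admit any faithful $3$-transitive action on a set $\Omega$ with the following two properties: (1) for every $\omega \in \Omega$ the group $G_\omega$ acts minimally and proximally on $\mathbb{S}^1$; (2) for every $\Delta \in \Omega^{\{2\}}$ the action of $G_\Delta$ on $\mathbb{S}^1$ has a unique fixed point $z(\Delta)$, and the action of $G_\Delta$ on $\mathbb{S}^1 \setminus \{z(\Delta)\}$ is minimal.
   Context: An action of a group $H$ on $\mathbb{S}^1$ is minimal if every orbit is dense; proximal if for all open intervals $I, J \subsetneq \mathbb{S}^1$ with $J \neq \emptyset$ there exists $h \in H$ with $h(I) \subset J$; topologically free if the fixed point set of every non-trivial element has empty interior. An action on $\mathbb{S}^1 \setminus \{z\}$ is minimal if every orbit is dense in it. $G_\omega$ is the stabilizer of $\omega$; $\Omega^{\{2\}}$ is the set of unordered pairs of elements of $\Omega$ and $G_\Delta$ the pointwise stabilizer of $\Delta$. $3$-transitive means transitive on ordered triples of distinct elements. *)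

theory Defs
  imports "HOL-Analysis.Analysis" "HOL-Algebra.Group_Action"
begin

definition S1 :: "complex set" where
  "S1 = sphere 0 1"

text \<open>Homeomorphisms of the circle, extended by the identity outside the circle
  (so that composition is the group law and the identity map is the unit).\<close>
definition homeo_S1 :: "(complex \<Rightarrow> complex) set" where
  "homeo_S1 = {f. (\<exists>g. homeomorphism S1 S1 f g) \<and> (\<forall>x. x \<notin> S1 \<longrightarrow> f x = x)}"

definition homeo_grp :: "(complex \<Rightarrow> complex) set \<Rightarrow> (complex \<Rightarrow> complex) monoid" where
  "homeo_grp H = \<lparr>carrier = H, mult = (\<circ>), one = id\<rparr>"

text \<open>Open intervals \<open>I \<subsetneq> S^1\<close>: connected relatively open subsets of the circle
  whose closure is not the whole circle (the empty set included).\<close>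
definition circle_interval :: "complex set \<Rightarrow> bool" where
  "circle_interval I \<longleftrightarrow> I \<subseteq> S1 \<and> openin (top_of_set S1) I \<and> connected I \<and> closure I \<noteq> S1"

definition minimal_on :: "(complex \<Rightarrow> complex) set \<Rightarrow> complex set \<Rightarrow> bool" where
  "minimal_on H X \<longleftrightarrow> (\<forall>x\<in>X. X \<subseteq> closure {h x | h. h \<in> H})"

definition minimal_action :: "(complex \<Rightarrow> complex) set \<Rightarrow> bool" where
  "minimal_action H \<longleftrightarrow> minimal_on H S1"

definition proximal_action :: "(complex \<Rightarrow> complex) set \<Rightarrow> bool" where
  "proximal_action H \<longleftrightarrow>
     (\<forall>I J. circle_interval I \<longrightarrow> circle_interval J \<longrightarrow> J \<noteq> {} \<longrightarrow> (\<exists>h\<in>H. h ` I \<subseteq> J))"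

definition topologically_free :: "(complex \<Rightarrow> complex) set \<Rightarrow> bool" where
  "topologically_free H \<longleftrightarrow>
     (\<forall>h\<in>H. h \<noteq> id \<longrightarrow> (top_of_set S1) interior_of {x \<in> S1. h x = x} = {})"

definition three_transitive ::
    "(complex \<Rightarrow> complex) set \<Rightarrow> ((complex \<Rightarrow> complex) \<Rightarrow> 'w \<Rightarrow> 'w) \<Rightarrow> 'w set \<Rightarrow> bool" where
  "three_transitive H \<phi> \<Omega> \<longleftrightarrow>
     (\<forall>a\<in>\<Omega>. \<forall>b\<in>\<Omega>. \<forall>c\<in>\<Omega>. \<forall>a'\<in>\<Omega>. \<forall>b'\<in>\<Omega>. \<forall>c'\<in>\<Omega>.
        a \<noteq> b \<and> a \<noteq> c \<and> b \<noteq> c \<and> a' \<noteq> b' \<and> a' \<noteq> c' \<and> b' \<noteq> c' \<longrightarrow>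
        (\<exists>h\<in>H. \<phi> h a = a' \<and> \<phi> h b = b' \<and> \<phi> h c = c'))"

definition stab :: "(complex \<Rightarrow> complex) set \<Rightarrow> ((complex \<Rightarrow> complex) \<Rightarrow> 'w \<Rightarrow> 'w) \<Rightarrow> 'w \<Rightarrow> (complex \<Rightarrow> complex) set" where
  "stab H \<phi> w = {h \<in> H. \<phi> h w = w}"

definition pstab :: "(complex \<Rightarrow> complex) set \<Rightarrow> ((complex \<Rightarrow> complex) \<Rightarrow> 'w \<Rightarrow> 'w) \<Rightarrow> 'w set \<Rightarrow> (complex \<Rightarrow> complex) set" where
  "pstab H \<phi> D = {h \<in> H. \<forall>w\<in>D. \<phi> h w = w}"

end

theory Submission
  imports Defs
begin

text \<open>Write \<open>z{a,b}\<close> for the fixed point of the pointwise stabiliser \<open>G\<^bsub>{a,b}\<^esub>\<close>. It is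
  equivariant, and 3-transitivity together with the minimality of \<open>G\<^sub>a\<close> makes \<open>b \<mapsto> z{a,b}\<close>
  injective, so an element of \<open>G\<^sub>a\<close> fixes \<open>z{a,b}\<close> exactly when it fixes \<open>b\<close>. Consequently two
  nontrivial elements of \<open>G\<^sub>a\<close> never have disjoint supports. If a nontrivial element of \<open>G\<^sub>a\<close> were
  the identity on a nonempty open set, proximality of \<open>G\<^sub>a\<close> would conjugate it within \<open>G\<^sub>a\<close> to
  an element whose support is disjoint from its own; so every \<open>G\<^sub>a\<close> is topologically free.
  Finally let \<open>g \<in> G\<close> be nontrivial and the identity on a nonempty open set \<open>V\<close>. If \<open>g\<close> moves
  \<open>a\<close>, minimality of \<open>G\<^bsub>{a, g\<^sup>-\<^sup>1 a}\<^esub>\<close> off its fixed point yields \<open>k\<close> in it carrying a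
  boundary point of \<open>V\<close> into \<open>V\<close>, and the commutator of \<open>g\<close> and \<open>k\<close> is then a nontrivial element
  of \<open>G\<^sub>a\<close> that is the identity on an open set.\<close>

section \<open>Caps and intervals of the circle\<close>

lemma mem_S1_iff: "x \<in> S1 \<longleftrightarrow> cmod x = 1"
  by (simp add: S1_def)

lemma minus_mem_S1: "z \<in> S1 \<Longrightarrow> -z \<in> S1"
  by (simp add: mem_S1_iff)

lemma S1_not_subset_singleton: "\<not> S1 \<subseteq> {z}"
proof
  assume "S1 \<subseteq> {z}"
  moreover have "1 \<in> S1" "-1 \<in> S1" by (simp_all add: mem_S1_iff)
  ultimately have "1 = z" "-1 = z" by auto
  then show False by simp
qed

lemma connected_S1_minus_point:
  assumes "z \<in> S1" shows "connected (S1 - {z})"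
proof -
  have "(S1 - {z}) homeomorphic {x::complex. 1 \<bullet> x = 0}"
    unfolding S1_def by (rule homeomorphic_punctured_sphere_hyperplane) (use assms in \<open>auto simp: S1_def\<close>)
  moreover have "connected {x::complex. 1 \<bullet> x = 0}"
    by (intro convex_connected convex_hyperplane)
  ultimately show ?thesis using homeomorphic_connectedness by blast
qed

lemma openin_S1_other_point:
  assumes "openin (top_of_set S1) V" "V \<noteq> {}"
  shows "\<exists>v\<in>V. v \<noteq> z"
proof (rule ccontr)
  assume "\<not> ?thesis"
  with assms(2) have V: "V = {z}" by auto
  then have "z \<in> S1" using openin_imp_subset[OF assms(1)] by blast
  then have "closedin (top_of_set S1) V" using V by simp
  moreover have "connected S1" unfolding S1_def by (rule connected_sphere) simp
  ultimately have "V = S1" using assms unfolding connected_clopen by blast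
  then have "S1 \<subseteq> {z}" using V by simp
  then show False using S1_not_subset_singleton by blast
qed

lemma openin_Int_closure_nonempty:
  assumes "openin (top_of_set S) U" "y \<in> U" "y \<in> closure A" "A \<subseteq> S"
  shows "U \<inter> A \<noteq> {}"
proof -
  obtain T where T: "open T" "U = S \<inter> T" using assms(1) by (auto simp: openin_open)
  then have "T \<inter> A \<noteq> {}" using assms(2,3) open_Int_closure_eq_empty[of T A] by blast
  then show ?thesis using T assms(4) by blast
qed

lemma openin_nonfixed_points:
  fixes f :: "'a::real_normed_vector \<Rightarrow> 'a"
  assumes "continuous_on S f" shows "openin (top_of_set S) {x\<in>S. f x \<noteq> x}"
proof -
  have "openin (top_of_set S) (S \<inter> (\<lambda>x. f x - x) -` (-{0}))"
    by (rule continuous_openin_preimage[where T=UNIV]) (auto intro: continuous_on_diff[OF assms continuous_on_id])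
  moreover have "S \<inter> (\<lambda>x. f x - x) -` (-{0}) = {x\<in>S. f x \<noteq> x}" by auto
  ultimately show ?thesis by simp
qed

lemma norm_diff_squared_S1:
  assumes "x \<in> S1" "w \<in> S1"
  shows "cmod (x - w) ^ 2 = 2 - 2 * Re (x * cnj w)"
proof -
  have "Re x ^ 2 + Im x ^ 2 = 1" "Re w ^ 2 + Im w ^ 2 = 1"
    using assms cmod_power2[of x] cmod_power2[of w] by (auto simp: mem_S1_iff)
  then show ?thesis using cmod_power2[of "x - w"] by (simp add: power2_eq_square algebra_simps)
qed

lemma Re_mult_cnj_eq_1_iff:
  assumes "x \<in> S1" "w \<in> S1" shows "Re (x * cnj w) = 1 \<longleftrightarrow> x = w"
proof -
  have "Re (x * cnj w) = 1 \<longleftrightarrow> cmod (x - w) ^ 2 = 0"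
    using norm_diff_squared_S1[OF assms] by linarith
  then show ?thesis by simp
qed

text \<open>For \<open>x, w \<in> S1\<close>, \<open>Re (x * cnj w)\<close> is the cosine of the angle between \<open>x\<close> and \<open>w\<close>.\<close>
definition circle_cap :: "complex \<Rightarrow> real \<Rightarrow> complex set" where
  "circle_cap w c = {x \<in> S1. c < Re (x * cnj w)}"

lemma mult_cnj_self_S1: "w \<in> S1 \<Longrightarrow> w * cnj w = 1"
  by (metis mem_S1_iff complex_norm_square of_real_1 power_one)

lemma cis_Arg_mult_cnj_S1:
  assumes "x \<in> S1" "w \<in> S1" shows "cis (Arg (x * cnj w)) = x * cnj w"
proof -
  have "cmod (x * cnj w) = 1" using assms by (simp add: mem_S1_iff norm_mult)
  then have "x * cnj w \<noteq> 0" "sgn (x * cnj w) = x * cnj w" by (auto simp: sgn_div_norm)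
  then show ?thesis by (simp add: cis_Arg)
qed

lemma circle_cap_eq_image:
  assumes w: "w \<in> S1" and c: "-1 \<le> c" "c < 1"
  shows "circle_cap w c = (\<lambda>t. w * cis t) ` {-arccos c<..<arccos c}"
proof -
  have arccos: "0 \<le> arccos c" "arccos c \<le> pi" "cos (arccos c) = c"
    using c arccos_lbound arccos_ubound cos_arccos by auto
  then have cos_gt_iff: "c < cos t \<longleftrightarrow> \<bar>t\<bar> < arccos c" if "\<bar>t\<bar> \<le> pi" for t
    using cos_mono_less_eq[of "arccos c" "\<bar>t\<bar>"] that by simp
  show ?thesis
  proof (intro equalityI subsetI)
    fix x assume x: "x \<in> circle_cap w c"
    define t where "t = Arg (x * cnj w)"
    have xS: "x \<in> S1" and "c < Re (x * cnj w)" using x by (auto simp: circle_cap_def)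
    then have "c < cos t" using cis_Arg_mult_cnj_S1[OF xS w] by (metis cis.sel(1) t_def)
    moreover have "\<bar>t\<bar> \<le> pi" using Arg_bounded[of "x * cnj w"] by (auto simp: t_def)
    moreover have "x = w * cis t"
      using cis_Arg_mult_cnj_S1[OF xS w] mult_cnj_self_S1[OF w] by (simp add: t_def algebra_simps)
    ultimately show "x \<in> (\<lambda>t. w * cis t) ` {-arccos c<..<arccos c}"
      using cos_gt_iff by (auto intro!: image_eqI[where x = t])
  next
    fix x assume "x \<in> (\<lambda>t. w * cis t) ` {-arccos c<..<arccos c}"
    then obtain t where t: "-arccos c < t" "t < arccos c" and x: "x = w * cis t" by auto
    have "x * cnj w = cis t" using x mult_cnj_self_S1[OF w] by (simp add: algebra_simps)
    then have "Re (x * cnj w) = cos t" by simp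
    moreover have "c < cos t" using t cos_gt_iff arccos(2) by simp
    moreover have "x \<in> S1" using x w by (simp add: mem_S1_iff norm_mult)
    ultimately show "x \<in> circle_cap w c" by (simp add: circle_cap_def)
  qed
qed

lemma circle_interval_circle_cap:
  assumes w: "w \<in> S1" and c: "-1 < c" "c < 1"
  shows "circle_interval (circle_cap w c)"
proof -
  have "connected ((\<lambda>t. w * cis t) ` {-arccos c<..<arccos c})"
    by (intro connected_continuous_image continuous_intros connected_Ioo)
  then have "connected (circle_cap w c)" using circle_cap_eq_image[OF w] c by simp
  moreover have "openin (top_of_set S1) (circle_cap w c)"
  proof -
    have "open {x. c < Re (x * cnj w)}" by (intro open_Collect_less continuous_intros)
    moreover have "circle_cap w c = S1 \<inter> {x. c < Re (x * cnj w)}" by (auto simp: circle_cap_def)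
    ultimately show ?thesis by (simp add: openin_open_Int)
  qed
  moreover have "closure (circle_cap w c) \<noteq> S1"
  proof -
    have "closed (S1 \<inter> {x. c \<le> Re (x * cnj w)})"
      by (intro closed_Int closed_Collect_le continuous_intros) (simp add: S1_def)
    then have "closure (circle_cap w c) \<subseteq> S1 \<inter> {x. c \<le> Re (x * cnj w)}"
      by (intro closure_minimal) (auto simp: circle_cap_def)
    moreover have "Re (-w * cnj w) = -1" using Re_mult_cnj_eq_1_iff[OF w w] by simp
    ultimately have "-w \<notin> closure (circle_cap w c)" using c by auto
    then show ?thesis using minus_mem_S1[OF w] by auto
  qed
  ultimately show ?thesis by (auto simp: circle_interval_def circle_cap_def)
qed

lemma center_mem_circle_cap: "w \<in> S1 \<Longrightarrow> c < 1 \<Longrightarrow> w \<in> circle_cap w c"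
  using Re_mult_cnj_eq_1_iff[of w w] by (simp add: circle_cap_def)

lemma circle_cap_subset_openin:
  assumes "openin (top_of_set S1) V" "w \<in> V"
  obtains c where "-1 < c" "c < 1" "circle_cap w c \<subseteq> V"
proof -
  obtain T where T: "open T" "V = S1 \<inter> T" using assms(1) by (auto simp: openin_open)
  obtain e0 where e0: "0 < e0" "ball w e0 \<subseteq> T" using T assms(2) open_contains_ball by blast
  define e where "e = min e0 1"
  have e: "0 < e" "e \<le> 1" "ball w e \<subseteq> T" using e0 by (auto simp: e_def)
  define c where "c = 1 - e\<^sup>2 / 2"
  have "e\<^sup>2 \<le> 1" using e by (simp add: power_le_one)
  then have c: "-1 < c" "c < 1" using e by (auto simp: c_def)
  have wS: "w \<in> S1" using assms T by auto
  have "circle_cap w c \<subseteq> V"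
  proof
    fix x assume "x \<in> circle_cap w c"
    then have x: "x \<in> S1" "c < Re (x * cnj w)" by (auto simp: circle_cap_def)
    then have "cmod (x - w) ^ 2 < e\<^sup>2" using norm_diff_squared_S1[OF x(1) wS] by (simp add: c_def)
    then have "cmod (x - w) < e" using e(1) by (simp add: power_less_imp_less_base)
    then have "x \<in> ball w e" by (simp add: dist_norm norm_minus_commute)
    then show "x \<in> V" using e T x by auto
  qed
  then show ?thesis using c that by blast
qed

lemma circle_intervals_inside_openin:
  assumes "openin (top_of_set S1) W" "W \<noteq> {}"
  obtains I J where "circle_interval I" "circle_interval J" "J \<noteq> {}" "J \<subseteq> W" "S1 - J \<subseteq> I"
proof -
  obtain w where w: "w \<in> W" using assms(2) by auto
  then have wS: "w \<in> S1" using openin_imp_subset[OF assms(1)] by auto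
  obtain c where c: "-1 < c" "c < 1" "circle_cap w c \<subseteq> W"
    using circle_cap_subset_openin[OF assms(1) w] by blast
  define c' where "c' = (c + 1) / 2"
  have c': "c < c'" "c' < 1" using c by (auto simp: c'_def)
  have "circle_interval (circle_cap (-w) (-c'))"
    by (rule circle_interval_circle_cap[OF minus_mem_S1[OF wS]]) (use c c' in auto)
  moreover have "S1 - circle_cap w c \<subseteq> circle_cap (-w) (-c')"
    using c' by (auto simp: circle_cap_def)
  ultimately show ?thesis
    using that circle_interval_circle_cap[OF wS c(1,2)] center_mem_circle_cap[OF wS c(2)] c(3) by blast
qed

section \<open>Groups of circle homeomorphisms\<close>

lemma homeo_S1D:
  assumes "f \<in> homeo_S1"
  shows "continuous_on S1 f" "f ` S1 = S1" "inj_on f S1" "x \<notin> S1 \<Longrightarrow> f x = x"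
proof -
  obtain g where g: "homeomorphism S1 S1 f g" and off: "\<forall>x. x \<notin> S1 \<longrightarrow> f x = x"
    using assms by (auto simp: homeo_S1_def)
  show "continuous_on S1 f" "f ` S1 = S1" using g by (auto simp: homeomorphism_def)
  show "inj_on f S1" using g by (metis homeomorphism_def inj_on_inverseI)
  show "x \<notin> S1 \<Longrightarrow> f x = x" using off by auto
qed

lemma homeo_S1_eq_id_if_fixes_all_but_one:
  assumes f: "f \<in> homeo_S1" and z: "z \<in> S1" and fixed: "\<forall>x\<in>S1 - {z}. f x = x"
  shows "f = id"
proof -
  have "f z = z"
  proof (rule ccontr)
    assume ne: "f z \<noteq> z"
    have fz: "f z \<in> S1" using homeo_S1D(2)[OF f] z by blast
    then have "f (f z) = f z" using fixed ne by blast
    then show False using inj_onD[OF homeo_S1D(3)[OF f] _ fz z] ne by blast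
  qed
  then show ?thesis using fixed homeo_S1D(4)[OF f] by (auto simp: fun_eq_iff)
qed

lemma interior_fixed_points_boundary:
  assumes f: "f \<in> homeo_S1" "f \<noteq> id" and z: "z \<in> S1"
    and V: "V = top_of_set S1 interior_of {x\<in>S1. f x = x}" "V \<noteq> {}"
  obtains y where "y \<in> S1 - {z}" "y \<in> closure V" "y \<in> closure {x\<in>S1. f x \<noteq> x}"
proof -
  define L where "L = S1 - {z}"
  have Vo: "openin (top_of_set S1) V" using V by simp
  have Vfix: "V \<subseteq> {x\<in>S1. f x = x}" unfolding V(1) by (rule interior_of_subset)
  have "V \<inter> L \<noteq> L"
  proof
    assume "V \<inter> L = L"
    then have "f = id"
      using Vfix by (intro homeo_S1_eq_id_if_fixes_all_but_one[OF f(1) z]) (auto simp: L_def)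
    then show False using f(2) by contradiction
  qed
  moreover have "V \<inter> L = L" if none: "\<forall>y\<in>L. y \<in> closure V \<longrightarrow> y \<notin> closure {x\<in>S1. f x \<noteq> x}"
  proof -
    have "L \<inter> closure V \<subseteq> V"
    proof
      fix y assume y: "y \<in> L \<inter> closure V"
      define U where "U = S1 \<inter> - closure {x\<in>S1. f x \<noteq> x}"
      have "U \<subseteq> {x\<in>S1. f x = x}"
        using closure_subset[of "{x\<in>S1. f x \<noteq> x}"] by (auto simp: U_def)
      moreover have "openin (top_of_set S1) U" by (simp add: U_def openin_open_Int open_Compl)
      ultimately have "U \<subseteq> V" unfolding V(1) by (rule interior_of_maximal)
      moreover have "y \<in> U" using y none by (auto simp: U_def L_def)
      ultimately show "y \<in> V" by blast
    qed
    then have "V \<inter> L = L \<inter> closure V" using closure_subset[of V] by blast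
    then have "closedin (top_of_set L) (V \<inter> L)" by (simp add: closedin_closed_Int)
    moreover obtain T where T: "open T" "V = S1 \<inter> T" using Vo by (auto simp: openin_open)
    then have "V \<inter> L = L \<inter> T" by (auto simp: L_def)
    then have "openin (top_of_set L) (V \<inter> L)" by (simp add: openin_open_Int T(1))
    moreover have "V \<inter> L \<noteq> {}" using openin_S1_other_point[OF Vo V(2)] Vfix by (auto simp: L_def)
    moreover have "connected L" unfolding L_def by (rule connected_S1_minus_point[OF z])
    ultimately show ?thesis unfolding connected_clopen by blast
  qed
  ultimately show ?thesis using that unfolding L_def by blast
qed

lemma minimal_on_orbit_meets_openin:
  assumes "minimal_on H X" "H \<subseteq> homeo_S1" "X \<subseteq> S1" "x \<in> X"
    and "openin (top_of_set S1) U" "U \<inter> X \<noteq> {}"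
  obtains h where "h \<in> H" "h x \<in> U"
proof -
  obtain u where u: "u \<in> U" "u \<in> X" using assms(6) by blast
  then have "u \<in> closure {h x | h. h \<in> H}" using assms(1,4) by (auto simp: minimal_on_def)
  moreover have "{h x | h. h \<in> H} \<subseteq> S1" using homeo_S1D(2) assms(2-4) by blast
  ultimately have "U \<inter> {h x | h. h \<in> H} \<noteq> {}"
    using openin_Int_closure_nonempty[OF assms(5) u(1)] by blast
  then show ?thesis using that by blast
qed

lemma homeo_grp_simps [simp]:
  "carrier (homeo_grp H) = H" "mult (homeo_grp H) = (\<circ>)" "one (homeo_grp H) = id"
  by (simp_all add: homeo_grp_def)

definition fixes_open_set :: "(complex \<Rightarrow> complex) \<Rightarrow> bool" where
  "fixes_open_set h \<longleftrightarrow> (\<exists>W. openin (top_of_set S1) W \<and> W \<noteq> {} \<and> (\<forall>x\<in>W. h x = x))"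

lemma topologically_free_iff:
  "topologically_free H \<longleftrightarrow> (\<forall>h\<in>H. h \<noteq> id \<longrightarrow> \<not> fixes_open_set h)"
proof -
  have "top_of_set S1 interior_of {x\<in>S1. h x = x} \<noteq> {} \<longleftrightarrow> fixes_open_set h" for h
  proof
    let ?V = "top_of_set S1 interior_of {x\<in>S1. h x = x}"
    assume "?V \<noteq> {}"
    moreover have "openin (top_of_set S1) ?V" "\<forall>x\<in>?V. h x = x"
      using interior_of_subset[of "top_of_set S1" "{x\<in>S1. h x = x}"] by auto
    ultimately show "fixes_open_set h" unfolding fixes_open_set_def by blast
  next
    assume "fixes_open_set h"
    then obtain W where "openin (top_of_set S1) W" "W \<noteq> {}" "\<forall>x\<in>W. h x = x"
      by (auto simp: fixes_open_set_def)
    moreover from this have "W \<subseteq> {x\<in>S1. h x = x}" using openin_imp_subset by blast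
    ultimately show "top_of_set S1 interior_of {x\<in>S1. h x = x} \<noteq> {}"
      using interior_of_maximal by blast
  qed
  then show ?thesis unfolding topologically_free_def by blast
qed

locale circle_group =
  fixes H :: "(complex \<Rightarrow> complex) set"
  assumes group: "group (homeo_grp H)" and subset_homeo_S1: "H \<subseteq> homeo_S1"
begin

lemma id_mem [simp]: "id \<in> H"
  using monoid.one_closed[OF group.is_monoid[OF group]] by simp

lemma comp_mem [simp]: "f \<in> H \<Longrightarrow> g \<in> H \<Longrightarrow> f \<circ> g \<in> H"
  using monoid.m_closed[OF group.is_monoid[OF group], of f g] by simp

lemma m_inv_eq_the_inv:
  assumes f: "f \<in> H" shows "inv\<^bsub>homeo_grp H\<^esub> f = the_inv f"
proof -
  define g where "g = inv\<^bsub>homeo_grp H\<^esub> f"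
  have "f \<circ> g = id" "g \<circ> f = id"
    using group.r_inv[OF group, of f] group.l_inv[OF group, of f] f by (simp_all add: g_def)
  then have "f (g x) = x" "g (f x) = x" for x by (metis comp_apply id_apply)+
  then have "the_inv f x = g x" for x by (metis inj_on_inverseI the_inv_f_f)
  then show ?thesis by (auto simp: g_def)
qed

lemma the_inv_mem [simp]: "f \<in> H \<Longrightarrow> the_inv f \<in> H"
  using group.inv_closed[OF group, of f] m_inv_eq_the_inv by simp

lemma the_inv_comp: "f \<in> H \<Longrightarrow> f \<circ> the_inv f = id" "f \<in> H \<Longrightarrow> the_inv f \<circ> f = id"
  using group.r_inv[OF group, of f] group.l_inv[OF group, of f] m_inv_eq_the_inv by simp_all

lemma f_the_inv [simp]: "f \<in> H \<Longrightarrow> f (the_inv f x) = x"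
  and the_inv_f [simp]: "f \<in> H \<Longrightarrow> the_inv f (f x) = x"
  using the_inv_comp by (metis comp_apply id_apply)+

lemma apply_eq_iff [simp]: "f \<in> H \<Longrightarrow> f x = f y \<longleftrightarrow> x = y"
  by (metis the_inv_f)

lemma maps_S1: "f \<in> H \<Longrightarrow> x \<in> S1 \<Longrightarrow> f x \<in> S1"
  using homeo_S1D(2) subset_homeo_S1 by blast

lemma continuous_on_S1: "f \<in> H \<Longrightarrow> continuous_on S1 f"
  using homeo_S1D(1) subset_homeo_S1 by blast

lemma conj_fixes_iff:
  "k \<in> H \<Longrightarrow> (k \<circ> f \<circ> the_inv k) x = x \<longleftrightarrow> f (the_inv k x) = the_inv k x"
  using apply_eq_iff[of k "f (the_inv k x)" "the_inv k x"] by simp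

lemma conj_eq_id_iff:
  assumes k: "k \<in> H" shows "k \<circ> f \<circ> the_inv k = id \<longleftrightarrow> f = id"
proof
  assume "k \<circ> f \<circ> the_inv k = id"
  then have "(k \<circ> f \<circ> the_inv k) (k y) = k y" for y by simp
  then have "f (the_inv k (k y)) = the_inv k (k y)" for y using conj_fixes_iff[OF k] by blast
  then show "f = id" using k by (simp add: fun_eq_iff)
qed (use the_inv_comp[OF k] in simp)

lemma openin_nonfixed_points_S1: "f \<in> H \<Longrightarrow> openin (top_of_set S1) {x\<in>S1. f x \<noteq> x}"
  by (rule openin_nonfixed_points[OF continuous_on_S1])

lemma nonfixed_points_nonempty: "f \<in> H \<Longrightarrow> f \<noteq> id \<Longrightarrow> {x\<in>S1. f x \<noteq> x} \<noteq> {}"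
  using homeo_S1D(4) subset_homeo_S1 by (fastforce simp: fun_eq_iff)

lemma proximal_disjoint_support:
  assumes prox: "proximal_action H" and h: "h \<in> H" "h \<noteq> id" "fixes_open_set h"
  obtains g where "g \<in> H" "g \<noteq> id" "\<forall>x\<in>S1. h x = x \<or> g x = x"
proof -
  obtain W where W: "openin (top_of_set S1) W" "W \<noteq> {}" "\<forall>x\<in>W. h x = x"
    using h(3) by (auto simp: fixes_open_set_def)
  obtain I J where IJ: "circle_interval I" "circle_interval J" "J \<noteq> {}" "J \<subseteq> W" "S1 - J \<subseteq> I"
    using circle_intervals_inside_openin[OF W(1,2)] by blast
  obtain k where k: "k \<in> H" "k ` I \<subseteq> J"
    using prox IJ(1-3) unfolding proximal_action_def by blast
  have "h x = x \<or> (k \<circ> h \<circ> the_inv k) x = x" if x: "x \<in> S1" for x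
  proof (cases "h (the_inv k x) = the_inv k x")
    case True
    then show ?thesis using conj_fixes_iff[OF k(1)] by blast
  next
    case False
    then have "the_inv k x \<in> I" using maps_S1[OF the_inv_mem[OF k(1)] x] W(3) IJ(4,5) by blast
    then have "k (the_inv k x) \<in> J" using k(2) by blast
    then show ?thesis using W(3) IJ(4) k(1) by auto
  qed
  moreover have "k \<circ> h \<circ> the_inv k \<noteq> id" using conj_eq_id_iff[OF k(1)] h(2) by blast
  moreover have "k \<circ> h \<circ> the_inv k \<in> H" using k(1) h(1) by simp
  ultimately show ?thesis using that by blast
qed

text \<open>The neighbourhood \<open>k\<^sup>-\<^sup>1 V\<close> of \<open>y\<close> meets \<open>V\<close>, giving the open set \<open>V \<inter> k V\<close> fixed by the
  commutator, and meets the moved set of \<open>g\<close> in some \<open>s\<close>, giving the point \<open>k s\<close> it moves.\<close>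
lemma commutator_fixes_open_set:
  assumes g: "g \<in> H" and k: "k \<in> H"
    and V: "openin (top_of_set S1) V" "\<forall>x\<in>V. g x = x"
    and y: "y \<in> S1" "y \<in> closure V" "y \<in> closure {x\<in>S1. g x \<noteq> x}" "k y \<in> V"
  shows "g \<circ> k \<circ> the_inv g \<circ> the_inv k \<noteq> id" "fixes_open_set (g \<circ> k \<circ> the_inv g \<circ> the_inv k)"
proof -
  let ?c = "g \<circ> k \<circ> the_inv g \<circ> the_inv k"
  have VS: "V \<subseteq> S1" using openin_imp_subset[OF V(1)] .
  have U: "openin (top_of_set S1) (S1 \<inter> k -` V)"
    using continuous_openin_preimage[OF continuous_on_S1[OF k] _ V(1)] maps_S1[OF k] by blast
  have yU: "y \<in> S1 \<inter> k -` V" using y by blast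
  obtain v where v: "v \<in> V" "k v \<in> V"
    using openin_Int_closure_nonempty[OF U yU y(2) VS] by blast
  obtain s where s: "g s \<noteq> s" "k s \<in> V"
    using openin_Int_closure_nonempty[OF U yU y(3)] by blast
  define W where "W = V \<inter> (S1 \<inter> the_inv k -` V)"
  have "openin (top_of_set S1) W" unfolding W_def
    using continuous_openin_preimage[OF continuous_on_S1[OF the_inv_mem[OF k]] _ V(1)]
      maps_S1[OF the_inv_mem[OF k]] V(1) by blast
  moreover have "k v \<in> W" using v k VS by (auto simp: W_def)
  moreover have "\<forall>x\<in>W. ?c x = x"
  proof
    fix x assume "x \<in> W"
    then have "g x = x" "g (the_inv k x) = the_inv k x" using V(2) by (auto simp: W_def)
    moreover from this(2) have "the_inv g (the_inv k x) = the_inv k x" using g the_inv_f by metis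
    ultimately show "?c x = x" using k by simp
  qed
  ultimately show "fixes_open_set ?c" unfolding fixes_open_set_def by blast
  show "?c \<noteq> id"
  proof
    assume "?c = id"
    then have "?c (k s) = k s" by simp
    also have "\<dots> = g (k s)" using V(2) s(2) by simp
    finally have "the_inv g s = s" using g k by simp
    then show False using s(1) f_the_inv[OF g, of s] by simp
  qed
qed

end

locale circle_action = circle_group G for G +
  fixes \<phi> :: "(complex \<Rightarrow> complex) \<Rightarrow> 'w \<Rightarrow> 'w" and \<Omega> :: "'w set"
  assumes action: "group_action (homeo_grp G) \<Omega> \<phi>"
    and faithful: "inj_on \<phi> G"
begin

lemma stab_iff [simp]: "h \<in> stab G \<phi> a \<longleftrightarrow> h \<in> G \<and> \<phi> h a = a"
  by (simp add: stab_def)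

lemma pstab_pair_iff [simp]: "h \<in> pstab G \<phi> {a, b} \<longleftrightarrow> h \<in> G \<and> \<phi> h a = a \<and> \<phi> h b = b"
  by (auto simp: pstab_def)

lemma act_mem [simp]: "f \<in> G \<Longrightarrow> a \<in> \<Omega> \<Longrightarrow> \<phi> f a \<in> \<Omega>"
  using group_action.element_image[OF action] by simp

lemma act_comp: "f \<in> G \<Longrightarrow> g \<in> G \<Longrightarrow> a \<in> \<Omega> \<Longrightarrow> \<phi> (f \<circ> g) a = \<phi> f (\<phi> g a)"
  using group_action.composition_rule[OF action] by simp

lemma act_id [simp]: "a \<in> \<Omega> \<Longrightarrow> \<phi> id a = a"
  using group_action.id_eq_one[OF action] by (metis homeo_grp_simps(3) restrict_apply)

lemma act_the_inv [simp]: "f \<in> G \<Longrightarrow> a \<in> \<Omega> \<Longrightarrow> \<phi> (the_inv f) (\<phi> f a) = a"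
  using act_comp[of "the_inv f" f a] the_inv_comp(2)[of f] by simp

lemma act_f_the_inv [simp]: "f \<in> G \<Longrightarrow> a \<in> \<Omega> \<Longrightarrow> \<phi> f (\<phi> (the_inv f) a) = a"
  using act_comp[of f "the_inv f" a] the_inv_comp(1)[of f] by simp

lemma act_eq_iff [simp]: "f \<in> G \<Longrightarrow> a \<in> \<Omega> \<Longrightarrow> b \<in> \<Omega> \<Longrightarrow> \<phi> f a = \<phi> f b \<longleftrightarrow> a = b"
  by (metis act_the_inv)

lemma act_conj_fixes_iff:
  "k \<in> G \<Longrightarrow> h \<in> G \<Longrightarrow> a \<in> \<Omega> \<Longrightarrow> \<phi> (the_inv k \<circ> h \<circ> k) a = a \<longleftrightarrow> \<phi> h (\<phi> k a) = \<phi> k a"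
  using act_comp[of "the_inv k \<circ> h" k a] act_comp[of "the_inv k" h "\<phi> k a"]
    act_eq_iff[of "the_inv k" "\<phi> h (\<phi> k a)" "\<phi> k a"] by simp

lemma circle_group_stab:
  assumes a: "a \<in> \<Omega>" shows "circle_group (stab G \<phi> a)"
proof (rule circle_group.intro)
  have "stab G \<phi> a = stabilizer (homeo_grp G) \<phi> a" by (simp add: stab_def stabilizer_def)
  then have "subgroup (stab G \<phi> a) (homeo_grp G)"
    using group_action.stabilizer_subgroup[OF action a] by simp
  then show "group (homeo_grp (stab G \<phi> a))"
    using subgroup.subgroup_is_group[OF _ group] by (simp add: homeo_grp_def)
  show "stab G \<phi> a \<subseteq> homeo_S1" using subset_homeo_S1 by (auto simp: stab_def)
qed

lemma exists_moved_point:
  assumes f: "f \<in> G" "f \<noteq> id" shows "\<exists>a\<in>\<Omega>. \<phi> f a \<noteq> a"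
proof (rule ccontr)
  assume "\<not> ?thesis"
  moreover have "\<phi> g \<in> extensional \<Omega>" if "g \<in> G" for g
    using group_action.bij_prop0[OF action] that by (simp add: Bij_def)
  ultimately have "\<phi> f = \<phi> id" using f(1) by (intro extensionalityI[where A = \<Omega>]) auto
  then show False using inj_onD[OF faithful] f by fastforce
qed

end

section \<open>Actions whose pair stabilisers have a unique fixed point\<close>

locale pair_fixed_point_action = circle_action +
  assumes three_transitive: "three_transitive G \<phi> \<Omega>"
    and minimal_stab: "a \<in> \<Omega> \<Longrightarrow> minimal_action (stab G \<phi> a)"
    and proximal_stab: "a \<in> \<Omega> \<Longrightarrow> proximal_action (stab G \<phi> a)"
    and pstab_unique_fixed_point:
      "a \<in> \<Omega> \<Longrightarrow> b \<in> \<Omega> \<Longrightarrow> a \<noteq> b \<Longrightarrow> \<exists>!z. z \<in> S1 \<and> (\<forall>h\<in>pstab G \<phi> {a, b}. h z = z)"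
    and minimal_pstab:
      "a \<in> \<Omega> \<Longrightarrow> b \<in> \<Omega> \<Longrightarrow> a \<noteq> b \<Longrightarrow> z \<in> S1 \<Longrightarrow> \<forall>h\<in>pstab G \<phi> {a, b}. h z = z \<Longrightarrow>
         minimal_on (pstab G \<phi> {a, b}) (S1 - {z})"
begin

text \<open>\<open>z{a,b}\<close>, the paper's \<open>z(\<Delta>)\<close> for \<open>\<Delta> = {a, b}\<close>; unspecified when \<open>a = b\<close>.\<close>
definition pair_point :: "_ \<Rightarrow> _ \<Rightarrow> complex" where
  "pair_point a b = (THE z. z \<in> S1 \<and> (\<forall>h\<in>pstab G \<phi> {a, b}. h z = z))"

lemma pair_point_mem_S1: "a \<in> \<Omega> \<Longrightarrow> b \<in> \<Omega> \<Longrightarrow> a \<noteq> b \<Longrightarrow> pair_point a b \<in> S1"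
  and pair_point_fixed:
    "a \<in> \<Omega> \<Longrightarrow> b \<in> \<Omega> \<Longrightarrow> a \<noteq> b \<Longrightarrow> h \<in> pstab G \<phi> {a, b} \<Longrightarrow> h (pair_point a b) = pair_point a b"
  using theI'[OF pstab_unique_fixed_point] unfolding pair_point_def by blast+

lemma pair_point_unique:
  "a \<in> \<Omega> \<Longrightarrow> b \<in> \<Omega> \<Longrightarrow> a \<noteq> b \<Longrightarrow> z \<in> S1 \<Longrightarrow> \<forall>h\<in>pstab G \<phi> {a, b}. h z = z \<Longrightarrow> z = pair_point a b"
  using the1_equality[OF pstab_unique_fixed_point] unfolding pair_point_def by blast

lemma pair_point_commute: "pair_point a b = pair_point b a"
  by (simp add: pair_point_def insert_commute)

lemma pair_point_equivariant:
  assumes k: "k \<in> G" and ab: "a \<in> \<Omega>" "b \<in> \<Omega>" "a \<noteq> b"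
  shows "k (pair_point a b) = pair_point (\<phi> k a) (\<phi> k b)"
proof (rule pair_point_unique)
  show "\<phi> k a \<in> \<Omega>" "\<phi> k b \<in> \<Omega>" "\<phi> k a \<noteq> \<phi> k b" using k ab by simp_all
  show "k (pair_point a b) \<in> S1" using maps_S1[OF k pair_point_mem_S1[OF ab]] .
  show "\<forall>h\<in>pstab G \<phi> {\<phi> k a, \<phi> k b}. h (k (pair_point a b)) = k (pair_point a b)"
  proof
    fix h assume "h \<in> pstab G \<phi> {\<phi> k a, \<phi> k b}"
    then have "the_inv k \<circ> h \<circ> k \<in> pstab G \<phi> {a, b}" using act_conj_fixes_iff k ab by simp
    then have "(the_inv k \<circ> h \<circ> k) (pair_point a b) = pair_point a b" by (rule pair_point_fixed[OF ab])
    then show "h (k (pair_point a b)) = k (pair_point a b)" using f_the_inv[OF k] by (metis comp_apply)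
  qed
qed

lemma stab_has_no_fixed_point:
  assumes a: "a \<in> \<Omega>" and p: "p \<in> S1" shows "\<exists>h\<in>stab G \<phi> a. h p \<noteq> p"
proof (rule ccontr)
  assume none: "\<not> ?thesis"
  have "S1 \<subseteq> closure {h p | h. h \<in> stab G \<phi> a}"
    using minimal_stab[OF a] p by (auto simp: minimal_action_def minimal_on_def)
  also have "\<dots> \<subseteq> closure {p}" by (rule closure_mono) (use none in auto)
  finally show False using S1_not_subset_singleton by simp
qed

text \<open>Any \<open>c\<close> can be moved to any \<open>b' \<notin> {a, b}\<close> inside the stabiliser of \<open>a\<close> and \<open>b\<close>, so a
  coincidence \<open>z{a,b} = z{a,c}\<close> would make \<open>z{a,b}\<close> a fixed point of the whole of \<open>G\<^sub>a\<close>.\<close>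
lemma pair_point_inj:
  assumes abc: "a \<in> \<Omega>" "b \<in> \<Omega>" "c \<in> \<Omega>" "a \<noteq> b" "a \<noteq> c" "b \<noteq> c"
  shows "pair_point a b \<noteq> pair_point a c"
proof
  assume eq: "pair_point a b = pair_point a c"
  define p where "p = pair_point a b"
  have "h p = p" if h: "h \<in> stab G \<phi> a" for h
  proof (cases "\<phi> h b = b")
    case True
    then show ?thesis using h pair_point_fixed[OF abc(1,2,4)] by (simp add: p_def)
  next
    case False
    have hb: "\<phi> h b \<in> \<Omega>" "\<phi> h b \<noteq> a" using h abc act_eq_iff by (fastforce, fastforce)
    obtain k where k: "k \<in> G" "\<phi> k a = a" "\<phi> k b = b" "\<phi> k c = \<phi> h b"
      using three_transitive[unfolded three_transitive_def, rule_format, OF abc(1-3) abc(1,2) hb(1)]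
        abc hb(2) False by auto
    have "h p = pair_point a (\<phi> h b)" using pair_point_equivariant[of h a b] h abc by (simp add: p_def)
    also have "\<dots> = k p" using pair_point_equivariant[OF k(1) abc(1,3,5)] k eq by (simp add: p_def)
    also have "\<dots> = p" using pair_point_fixed[OF abc(1,2,4)] k by (simp add: p_def)
    finally show ?thesis .
  qed
  then show False using stab_has_no_fixed_point[OF abc(1) pair_point_mem_S1[OF abc(1,2,4)]] p_def by blast
qed

lemma fixes_pair_point_iff:
  assumes ab: "a \<in> \<Omega>" "b \<in> \<Omega>" "a \<noteq> b" and g: "g \<in> G" "\<phi> g a = a"
  shows "g (pair_point a b) = pair_point a b \<longleftrightarrow> \<phi> g b = b"
proof -
  have "g (pair_point a b) = pair_point a (\<phi> g b)" using pair_point_equivariant[OF g(1) ab] g(2) by simp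
  moreover have "\<phi> g b \<in> \<Omega>" "\<phi> g b \<noteq> a" using ab g act_eq_iff by (fastforce, fastforce)
  ultimately show ?thesis using pair_point_inj[of a b "\<phi> g b"] ab by (cases "\<phi> g b = b") auto
qed

lemma exists_pair_point_in_openin:
  assumes a: "a \<in> \<Omega>" and b: "b \<in> \<Omega>" "b \<noteq> a"
    and U: "openin (top_of_set S1) U" "U \<noteq> {}"
  obtains c where "c \<in> \<Omega>" "c \<noteq> a" "pair_point a c \<in> U"
proof -
  have "stab G \<phi> a \<subseteq> homeo_S1" using subset_homeo_S1 by auto
  moreover have "U \<inter> S1 \<noteq> {}" using U openin_imp_subset by blast
  ultimately obtain h where h: "h \<in> stab G \<phi> a" "h (pair_point a b) \<in> U"
    using minimal_on_orbit_meets_openin[OF minimal_stab[OF a, unfolded minimal_action_def] _ order_refl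
        pair_point_mem_S1[OF a b(1) b(2)[symmetric]] U(1)]
    by blast
  then have "pair_point a (\<phi> h b) \<in> U" using pair_point_equivariant[of h a b] a b by simp
  moreover have "\<phi> h b \<in> \<Omega>" "\<phi> h b \<noteq> a" using h a b act_eq_iff by (fastforce, fastforce)
  ultimately show ?thesis using that by blast
qed

text \<open>If \<open>z{a,u}\<close> is moved by \<open>g\<^sub>1\<close> and \<open>z{a,v}\<close> by \<open>g\<^sub>2\<close>, then \<open>g\<^sub>1\<close> moves \<open>u\<close> but fixes \<open>v\<close> and
  \<open>g\<^sub>2\<close> the other way round, so both move \<open>z{u,v}\<close>.\<close>
lemma no_disjoint_supports_in_stab:
  assumes a: "a \<in> \<Omega>" and g1: "g1 \<in> stab G \<phi> a" "g1 \<noteq> id" and g2: "g2 \<in> stab G \<phi> a" "g2 \<noteq> id"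
    and disjoint: "\<forall>x\<in>S1. g1 x = x \<or> g2 x = x"
  shows False
proof -
  obtain b where b: "b \<in> \<Omega>" "b \<noteq> a" using exists_moved_point[of g1] g1 by auto
  obtain u where u: "u \<in> \<Omega>" "u \<noteq> a" "g1 (pair_point a u) \<noteq> pair_point a u"
    using exists_pair_point_in_openin[OF a b openin_nonfixed_points_S1 nonfixed_points_nonempty] g1
    by auto
  obtain v where v: "v \<in> \<Omega>" "v \<noteq> a" "g2 (pair_point a v) \<noteq> pair_point a v"
    using exists_pair_point_in_openin[OF a b openin_nonfixed_points_S1 nonfixed_points_nonempty] g2
    by auto
  have "g2 (pair_point a u) = pair_point a u"
    using disjoint pair_point_mem_S1[OF a u(1) u(2)[symmetric]] u(3) by blast
  then have g1u: "\<phi> g1 u \<noteq> u" and g2u: "\<phi> g2 u = u"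
    using fixes_pair_point_iff[OF a u(1) u(2)[symmetric]] g1(1) g2(1) u(3) by simp_all
  have "g1 (pair_point a v) = pair_point a v"
    using disjoint pair_point_mem_S1[OF a v(1) v(2)[symmetric]] v(3) by blast
  then have g2v: "\<phi> g2 v \<noteq> v" and g1v: "\<phi> g1 v = v"
    using fixes_pair_point_iff[OF a v(1) v(2)[symmetric]] g1(1) g2(1) v(3) by simp_all
  then have uv: "u \<noteq> v" using g1u by auto
  have "g2 (pair_point u v) \<noteq> pair_point u v"
    using fixes_pair_point_iff[OF u(1) v(1) uv _ g2u] g2 g2v by simp
  moreover have "g1 (pair_point u v) \<noteq> pair_point u v"
    using fixes_pair_point_iff[OF v(1) u(1) uv[symmetric] _ g1v] g1 g1u pair_point_commute by simp
  ultimately show False using disjoint pair_point_mem_S1[OF u(1) v(1) uv] by blast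
qed

lemma topologically_free_stab:
  assumes a: "a \<in> \<Omega>" shows "topologically_free (stab G \<phi> a)"
  unfolding topologically_free_iff
proof (intro ballI impI notI)
  fix h assume h: "h \<in> stab G \<phi> a" "h \<noteq> id" "fixes_open_set h"
  interpret Ga: circle_group "stab G \<phi> a" by (rule circle_group_stab[OF a])
  obtain g where "g \<in> stab G \<phi> a" "g \<noteq> id" "\<forall>x\<in>S1. h x = x \<or> g x = x"
    using Ga.proximal_disjoint_support[OF proximal_stab[OF a] h] by blast
  then show False using no_disjoint_supports_in_stab[OF a h(1,2)] by blast
qed

text \<open>If \<open>g\<close> moves \<open>a\<close>, its commutator with any \<open>k\<close> fixing \<open>a\<close> and \<open>g\<^sup>-\<^sup>1 a\<close> lies in \<open>G\<^sub>a\<close>;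
  minimality of that pair stabiliser off its fixed point provides a \<open>k\<close> pushing a common
  boundary point of the fixed and the moved set of \<open>g\<close> into the interior of the fixed set.\<close>
lemma not_topologically_free_stab:
  assumes g: "g \<in> G" "g \<noteq> id"
    and V: "V = top_of_set S1 interior_of {x\<in>S1. g x = x}" "V \<noteq> {}"
    and a: "a \<in> \<Omega>"
  shows "\<not> topologically_free (stab G \<phi> a)"
proof (cases "\<phi> g a = a")
  case True
  then have "g \<in> stab G \<phi> a" using g(1) by simp
  then show ?thesis using g(2) V unfolding topologically_free_def by blast
next
  case False
  define a' where "a' = \<phi> (the_inv g) a"
  have a': "a' \<in> \<Omega>" "\<phi> g a' = a" using a g by (simp_all add: a'_def)
  then have "a \<noteq> a'" using False by auto
  define z where "z = pair_point a a'"
  have z: "z \<in> S1" "\<forall>h\<in>pstab G \<phi> {a, a'}. h z = z"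
    using pair_point_mem_S1[OF a a'(1) \<open>a \<noteq> a'\<close>] pair_point_fixed[OF a a'(1) \<open>a \<noteq> a'\<close>] by (auto simp: z_def)
  obtain y where y: "y \<in> S1 - {z}" "y \<in> closure V" "y \<in> closure {x\<in>S1. g x \<noteq> x}"
    using interior_fixed_points_boundary[OF _ g(2) z(1) V] subset_homeo_S1 g(1) by blast
  have Vo: "openin (top_of_set S1) V" using V by simp
  have "V \<subseteq> {x\<in>S1. g x = x}" unfolding V(1) by (rule interior_of_subset)
  then have Vfix: "\<forall>x\<in>V. g x = x" by blast
  have "V \<inter> (S1 - {z}) \<noteq> {}" using openin_S1_other_point[OF Vo V(2)] openin_imp_subset[OF Vo] by blast
  moreover have "pstab G \<phi> {a, a'} \<subseteq> homeo_S1" using subset_homeo_S1 by auto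
  ultimately obtain k where k: "k \<in> pstab G \<phi> {a, a'}" "k y \<in> V"
    using minimal_on_orbit_meets_openin[OF minimal_pstab[OF a a'(1) \<open>a \<noteq> a'\<close> z] _ Diff_subset y(1) Vo]
    by blast
  let ?c = "g \<circ> k \<circ> the_inv g \<circ> the_inv k"
  have kG: "k \<in> G" and yS: "y \<in> S1" using k(1) y(1) by simp_all
  then have "?c \<noteq> id" "fixes_open_set ?c"
    using commutator_fixes_open_set[OF g(1) kG Vo Vfix yS y(2,3) k(2)] by simp_all
  moreover have "?c \<in> stab G \<phi> a"
  proof -
    have "\<phi> (the_inv k) a = a" using act_the_inv[OF kG a] k(1) by simp
    then show ?thesis using k a a' g(1) by (simp add: act_comp a'_def)
  qed
  ultimately show ?thesis unfolding topologically_free_iff by blast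
qed

lemma topologically_free: "topologically_free G"
proof (rule ccontr)
  assume "\<not> topologically_free G"
  then obtain g where g: "g \<in> G" "g \<noteq> id" "top_of_set S1 interior_of {x\<in>S1. g x = x} \<noteq> {}"
    unfolding topologically_free_def by blast
  obtain a where "a \<in> \<Omega>" using exists_moved_point[OF g(1,2)] by blast
  then show False using not_topologically_free_stab[OF g(1,2) refl g(3)] topologically_free_stab by blast
qed

end

lemma pair_fixed_point_actionI:
  assumes "subgroup G (homeo_grp homeo_S1)" and action: "group_action (homeo_grp G) \<Omega> \<phi>"
    and "inj_on \<phi> G" "three_transitive G \<phi> \<Omega>"
    and "\<forall>w\<in>\<Omega>. minimal_action (stab G \<phi> w) \<and> proximal_action (stab G \<phi> w)"
    and "\<forall>a\<in>\<Omega>. \<forall>b\<in>\<Omega>. a \<noteq> b \<longrightarrow>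
           (\<exists>!z. z \<in> S1 \<and> (\<forall>h\<in>pstab G \<phi> {a, b}. h z = z)) \<and>
           (\<forall>z. z \<in> S1 \<and> (\<forall>h\<in>pstab G \<phi> {a, b}. h z = z) \<longrightarrow> minimal_on (pstab G \<phi> {a, b}) (S1 - {z}))"
  shows "pair_fixed_point_action G \<phi> \<Omega>"
proof (intro pair_fixed_point_action.intro circle_action.intro circle_group.intro
    circle_action_axioms.intro pair_fixed_point_action_axioms.intro)
  show "group (homeo_grp G)" using action by (simp add: group_action_def group_hom_def)
  show "G \<subseteq> homeo_S1" using subgroup.subset[OF assms(1)] by simp
qed (use assms in blast)+

theorem proposition4p10:
  fixes G :: "(complex \<Rightarrow> complex) set"
    and \<phi> :: "(complex \<Rightarrow> complex) \<Rightarrow> 'w \<Rightarrow> 'w"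
    and \<Omega> :: "'w set"
  assumes "subgroup G (homeo_grp homeo_S1)"
    and "minimal_action G"
    and "proximal_action G"
    and "\<not> topologically_free G"
  shows "\<not> (group_action (homeo_grp G) \<Omega> \<phi> \<and> inj_on \<phi> G \<and> three_transitive G \<phi> \<Omega> \<and>
            (\<forall>w\<in>\<Omega>. minimal_action (stab G \<phi> w) \<and> proximal_action (stab G \<phi> w)) \<and>
            (\<forall>a\<in>\<Omega>. \<forall>b\<in>\<Omega>. a \<noteq> b \<longrightarrow>
               (\<exists>!z. z \<in> S1 \<and> (\<forall>h\<in>pstab G \<phi> {a, b}. h z = z)) \<and>
               (\<forall>z. z \<in> S1 \<and> (\<forall>h\<in>pstab G \<phi> {a, b}. h z = z) \<longrightarrow>
                  minimal_on (pstab G \<phi> {a, b}) (S1 - {z}))))"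
  using pair_fixed_point_actionI[OF assms(1)] pair_fixed_point_action.topologically_free assms(4)
  by blast

end
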